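(* Let $w\in\Sigma^n$. If $\mathtt{BR}(w)$ contains no rich word, then $|\mathrm{Alph}(w)|<n-1$.
   Context: $\Sigma$ is an alphabet and $\Sigma^n$ the set of words of length $n$ over it. For a word $w=w_1\cdots w_n$, $w^R=w_n\cdots w_1$; $w$ is a palindrome if $w=w^R$; a factor of $w$ is a word $u$ with $w=puq$. A word $w$ is rich if the number of distinct nonempty palindromic factors of $w$ equals $|w|$. $\mathrm{Alph}(w)$ is the set of letters occurring in $w$. The block reversal of a nonempty word $w$ is $\mathtt{BR}(w)=\{B_t\cdots B_1 : w=B_1\cdots B_t,\ t\ge1,\ \text{each } B_i \text{ nonempty}\}$. *)

theory Defs
  imports Main "HOL-Library.Sublist"
begin

definition pal_factors :: "'a list \<Rightarrow> 'a list set" where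
  "pal_factors w = {u. u \<noteq> [] \<and> sublist u w \<and> rev u = u}"

definition rich :: "'a list \<Rightarrow> bool" where
  "rich w \<longleftrightarrow> card (pal_factors w) = length w"

definition block_reversal :: "'a list \<Rightarrow> 'a list set" where
  "block_reversal w = {concat (rev Bs) | Bs. Bs \<noteq> [] \<and> (\<forall>B\<in>set Bs. B \<noteq> []) \<and> concat Bs = w}"

end

theory Submission
  imports Defs "HOL-Library.Multiset"
begin

(*
  Suppose w has at least n - 1 distinct letters. If all letters are distinct, w itself (a single
  block) is rich: a palindrome of length at least 2 repeats its first letter, so the only
  palindromic factors are the n letters. Otherwise exactly one letter a occurs twice,
  w = x a y a z with x a y z repetition-free, and reversing the blocks x, ay, a, z yields
  z a a y x. Its palindromic factors are its n - 1 letters and aa: a longer palindrome must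
  start and end with a, the only repeated letter, and its inner part is then a palindrome
  without repeated letters, hence of length at most 1; length 1 is excluded because the
  two occurrences of a are adjacent.
*)

lemma palindrome_Cons_snoc:
  assumes "rev u = u" and "2 \<le> length u"
  obtains c m where "u = c # m @ [c]" and "rev m = m"
proof -
  obtain c u' where u: "u = c # u'"
    using assms(2) by (cases u) auto
  with assms(2) have "u' \<noteq> []"
    by auto
  then obtain m d where u': "u' = m @ [d]"
    by (cases u' rule: rev_cases) auto
  have "d # rev m @ [c] = rev u"
    by (simp add: u u')
  also have "\<dots> = u"
    by (rule assms(1))
  also have "\<dots> = c # m @ [d]"
    by (simp add: u u')
  finally have "d = c" and "rev m @ [c] = m @ [d]"
    by (simp_all only: list.inject)
  from \<open>rev m @ [c] = m @ [d]\<close> have "rev m = m"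
    by simp
  with u u' \<open>d = c\<close> show thesis
    using that by blast
qed

lemma distinct_palindrome_length_le_1:
  assumes "rev u = u" and "distinct u"
  shows "length u \<le> 1"
proof (rule ccontr)
  assume "\<not> length u \<le> 1"
  with assms(1) obtain c m where "u = c # m @ [c]"
    using palindrome_Cons_snoc by (metis not_less_eq_eq numeral_2_eq_2 One_nat_def)
  with assms(2) show False by simp
qed

lemma distinct_iff_count_list_le_1: "distinct xs \<longleftrightarrow> (\<forall>x. count_list xs x \<le> 1)"
proof -
  have "count_list xs x = (if x \<in> set xs then 1 else 0) \<longleftrightarrow> count_list xs x \<le> 1" for x
    using count_list_0_iff[of xs x] by auto
  then show ?thesis
    by (simp add: distinct_count_atmost_1 count_mset)
qed

lemma count_list_mono_sublist: "sublist u v \<Longrightarrow> count_list u x \<le> count_list v x"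
  by (auto simp: sublist_def)

lemma distinct_sublist: "sublist u v \<Longrightarrow> distinct v \<Longrightarrow> distinct u"
  by (auto simp: sublist_def)

lemma short_pal_factors: "{u \<in> pal_factors v. length u \<le> 1} = (\<lambda>c. [c]) ` set v"
proof -
  have "sublist [c] v \<longleftrightarrow> c \<in> set v" for c
    by (induction v) (auto simp: sublist_Cons_right)
  moreover have "length u \<le> 1 \<longleftrightarrow> u = [] \<or> (\<exists>c. u = [c])" for u :: "'a list"
    by (cases u) auto
  ultimately show ?thesis
    by (auto simp: pal_factors_def)
qed

lemma card_singletons: "card ((\<lambda>c. [c]) ` A) = card A"
  by (rule card_image) (simp add: inj_on_def)

lemma rich_if_distinct:
  assumes "distinct w"
  shows "rich w"
proof -
  have "length u \<le> 1" if "u \<in> pal_factors w" for u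
    using that assms distinct_sublist distinct_palindrome_length_le_1
    by (auto simp: pal_factors_def)
  then have "pal_factors w = (\<lambda>c. [c]) ` set w"
    using short_pal_factors[of w] by blast
  with assms show ?thesis
    by (simp add: rich_def card_singletons distinct_card)
qed

lemma not_sublist_split_square:
  assumes "a \<notin> set p" and "a \<notin> set q" and "b \<noteq> a"
  shows "\<not> sublist [a, b, a] (p @ a # a # q)"
  using assms(1)
proof (induction p)
  case Nil
  with assms(2,3) show ?case
    by (auto simp: sublist_Cons_right prefix_def dest: set_mono_sublist)
next
  case (Cons c p)
  then show ?case
    by (auto simp: sublist_Cons_right)
qed

lemma long_pal_factor_of_square:
  assumes "distinct (p @ a # q)" and "u \<in> pal_factors (p @ a # a # q)" and "2 \<le> length u"
  shows "u = [a, a]"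
proof -
  let ?v = "p @ a # a # q"
  have u: "sublist u ?v" "rev u = u"
    using assms(2) by (auto simp: pal_factors_def)
  have count_other: "count_list ?v x \<le> 1" if "x \<noteq> a" for x
  proof -
    have "count_list ?v x = count_list (p @ a # q) x"
      using that by simp
    also have "\<dots> \<le> 1"
      using assms(1) unfolding distinct_iff_count_list_le_1 by blast
    finally show ?thesis .
  qed
  have count_a: "count_list ?v a = 2"
    using assms(1) by simp
  obtain c m where um: "u = c # m @ [c]" and "rev m = m"
    using palindrome_Cons_snoc u(2) assms(3) .
  have "2 \<le> count_list u c"
    using um by simp
  have "c = a"
  proof (rule ccontr)
    assume "c \<noteq> a"
    with \<open>2 \<le> count_list u c\<close> show False
      using count_list_mono_sublist[OF u(1), of c] count_other[of c] by linarith
  qed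
  have "count_list m a = 0"
    using count_list_mono_sublist[OF u(1), of a] count_a um \<open>c = a\<close> by simp
  then have "a \<notin> set m"
    by (simp add: count_list_0_iff)
  have "count_list m x \<le> 1" for x
    using count_list_mono_sublist[OF u(1), of x] count_other[of x] um \<open>c = a\<close> \<open>a \<notin> set m\<close>
    by (cases "x = a") auto
  then have "length m \<le> 1"
    using \<open>rev m = m\<close> distinct_palindrome_length_le_1 distinct_iff_count_list_le_1 by blast
  moreover have "m \<noteq> [b]" for b
  proof
    assume "m = [b]"
    then have "sublist [a, b, a] ?v" and "b \<noteq> a"
      using u(1) um \<open>c = a\<close> \<open>a \<notin> set m\<close> by simp_all
    moreover have "a \<notin> set p" and "a \<notin> set q"
      using assms(1) by auto
    ultimately show False
      using not_sublist_split_square by metis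
  qed
  ultimately show ?thesis
    using um \<open>c = a\<close> by (cases m) auto
qed

lemma rich_split_square:
  assumes "distinct (p @ a # q)"
  shows "rich (p @ a # a # q)"
proof -
  let ?v = "p @ a # a # q"
  have "[a, a] \<in> pal_factors ?v"
    using sublist_appendI[of "[a, a]" p q] by (simp add: pal_factors_def)
  have "pal_factors ?v = insert [a, a] {u \<in> pal_factors ?v. length u \<le> 1}"
  proof (intro equalityI subsetI)
    fix u
    assume u: "u \<in> pal_factors ?v"
    show "u \<in> insert [a, a] {u \<in> pal_factors ?v. length u \<le> 1}"
    proof (cases "length u \<le> 1")
      case True
      with u show ?thesis by simp
    next
      case False
      with long_pal_factor_of_square[OF assms u] show ?thesis by simp
    qed
  next
    fix u
    assume "u \<in> insert [a, a] {u \<in> pal_factors ?v. length u \<le> 1}"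
    with \<open>[a, a] \<in> pal_factors ?v\<close> show "u \<in> pal_factors ?v" by auto
  qed
  also have "\<dots> = insert [a, a] ((\<lambda>c. [c]) ` set (p @ a # q))"
    unfolding short_pal_factors by auto
  finally have factors: "pal_factors ?v = insert [a, a] ((\<lambda>c. [c]) ` set (p @ a # q))" .
  have "card (pal_factors ?v) = Suc (card ((\<lambda>c. [c]) ` set (p @ a # q)))"
    unfolding factors by (simp add: card_insert_if image_iff)
  also have "\<dots> = length ?v"
    unfolding card_singletons distinct_card[OF assms] by simp
  finally show ?thesis
    unfolding rich_def .
qed

lemma concat_rev_in_block_reversal:
  assumes "concat Bs \<noteq> []"
  shows "concat (rev Bs) \<in> block_reversal (concat Bs)"
proof -
  let ?Cs = "filter (\<lambda>B. B \<noteq> []) Bs"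
  have "concat (filter (\<lambda>B. B \<noteq> []) Cs) = concat Cs" for Cs :: "'a list list"
    by (induction Cs) auto
  then have "concat ?Cs = concat Bs" and "concat (rev ?Cs) = concat (rev Bs)"
    by (simp_all add: rev_filter)
  moreover have "?Cs \<noteq> []"
    using assms \<open>concat ?Cs = concat Bs\<close> by auto
  ultimately show ?thesis
    unfolding block_reversal_def by (auto intro!: exI[of _ ?Cs])
qed

lemma split_single_repetition:
  assumes "length w - 1 \<le> card (set w)" and "\<not> distinct w"
  obtains x a y z where "w = x @ a # y @ a # z" and "distinct (x @ a # y @ z)"
proof -
  obtain x a y z where w: "w = x @ [a] @ y @ [a] @ z"
    using assms(2) not_distinct_decomp by blast
  let ?r = "x @ a # y @ z"
  have "set ?r = set w" and "length ?r = length w - 1"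
    using w by auto
  then have "card (set ?r) = length ?r"
    using assms(1) card_length[of ?r] by simp
  then have "distinct ?r"
    by (rule card_distinct)
  with w show thesis
    using that by simp
qed

theorem mainTheorem3:
  fixes w :: "'a list" and n :: nat
  assumes "length w = n"
    and "w \<noteq> []"
    and "\<forall>v\<in>block_reversal w. \<not> rich v"
  shows "card (set w) < n - 1"
proof (rule ccontr)
  assume "\<not> card (set w) < n - 1"
  then have "length w - 1 \<le> card (set w)"
    using assms(1) by simp
  show False
  proof (cases "distinct w")
    case True
    have "w \<in> block_reversal w"
      using concat_rev_in_block_reversal[of "[w]"] assms(2) by simp
    then show False
      using rich_if_distinct[OF True] assms(3) by blast
  next
    case False
    then obtain x a y z where w: "w = x @ a # y @ a # z" and "distinct (x @ a # y @ z)"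
      using split_single_repetition \<open>length w - 1 \<le> card (set w)\<close> by blast
    then have "rich (z @ a # a # y @ x)"
      by (intro rich_split_square) auto
    moreover have "z @ a # a # y @ x \<in> block_reversal w"
      using concat_rev_in_block_reversal[of "[x, a # y, [a], z]"] w by simp
    ultimately show False
      using assms(3) by blast
  qed
qed

end
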